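(* Let $A\in\mathbb{Z}^{m\times n}$ have full column rank, $b\in\mathbb{Z}^m$, $c\in\mathbb{Q}^n$, and let $x^*$ be an optimal vertex of $\max\{c^\top x: Ax\le b,\ x\in\mathbb{R}^n\}$, where the integer program $\max\{c^\top x: Ax\le b,\ x\in\mathbb{Z}^n\}$ is feasible. Then there exist an optimal solution $z^*$ of this integer program, an integral matrix $\bar A$ whose rows are rows of $A$ or their negatives, and an integral vector $\bar b$ such that $\{x:\bar Ax\le\bar b\}\subseteq\{x:Ax\le b\}$, $x^*$ is a vertex of $\{x:\bar Ax\le \bar b\}$, and $\{x:\bar Ax\le\bar b\}\cap\mathbb{Z}^n=\{z^*\}$. *)

theory Defs
  imports "HOL-Analysis.Analysis"
begin

definition real_mat :: "int^'n^'m \<Rightarrow> real^'n^'m" where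
  "real_mat A = (\<chi> i j. real_of_int (A $ i $ j))"

definition polyhedron :: "int^'n^'m \<Rightarrow> int^'m \<Rightarrow> (real^'n) set" where
  "polyhedron A b = {x. \<forall>i. (\<Sum>j\<in>UNIV. real_of_int (A $ i $ j) * x $ j) \<le> real_of_int (b $ i)}"

definition polyhedron_list :: "((int^'n) \<times> int) list \<Rightarrow> (real^'n) set" where
  "polyhedron_list L = {x. \<forall>(r, \<beta>) \<in> set L. (\<Sum>j\<in>UNIV. real_of_int (r $ j) * x $ j) \<le> real_of_int \<beta>}"

definition integral_vec :: "real^'n \<Rightarrow> bool" where
  "integral_vec x \<longleftrightarrow> (\<forall>j. x $ j \<in> \<int>)"

definition vertex_of :: "real^'n \<Rightarrow> (real^'n) set \<Rightarrow> bool" where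
  "vertex_of v P \<longleftrightarrow> v extreme_point_of P"

end

theory Submission
  imports Defs
begin

text \<open>
  Among the integral optima, pick \<open>z\<^sup>*\<close> maximising the sum of the constraints
  that are tight at \<open>x\<^sup>*\<close>, and add to \<open>Ax \<le> b\<close> the cuts \<open>A\<^sub>i x \<ge> A\<^sub>i z\<^sup>*\<close> for those tight
  rows \<open>i\<close>. Then \<open>x\<^sup>*\<close> still satisfies the new system and stays a vertex. If \<open>z\<close> is another
  integral point of it, \<open>z\<^sup>* - z\<close> is a feasible direction at \<open>x\<^sup>*\<close>, so by optimality of \<open>x\<^sup>*\<close>
  the point \<open>z\<close> is an integral optimum too; the choice of \<open>z\<^sup>*\<close> then forces \<open>A\<^sub>i z = A\<^sub>i z\<^sup>*\<close>
  on all tight rows, so \<open>\<plusminus>(z - z\<^sup>*)\<close> are both feasible directions at \<open>x\<^sup>*\<close>, and since \<open>x\<^sup>*\<close> is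
  a vertex, \<open>z = z\<^sup>*\<close>.
\<close>

definition int_inner :: "int^'n \<Rightarrow> real^'n \<Rightarrow> real" where
  "int_inner r x = (\<Sum>j\<in>UNIV. real_of_int (r $ j) * x $ j)"

lemma int_inner_add_right: "int_inner r (x + y) = int_inner r x + int_inner r y"
  by (simp add: int_inner_def algebra_simps sum.distrib)

lemma int_inner_diff_right: "int_inner r (x - y) = int_inner r x - int_inner r y"
  by (simp add: int_inner_def algebra_simps sum_subtractf)

lemma int_inner_scaleR_right: "int_inner r (t *\<^sub>R x) = t * int_inner r x"
  by (simp add: int_inner_def sum_distrib_left mult_ac)

lemma int_inner_minus_right: "int_inner r (- x) = - int_inner r x"
  by (simp add: int_inner_def sum_negf)

lemma int_inner_minus_left: "int_inner (- r) x = - int_inner r x"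
  by (simp add: int_inner_def sum_negf)

lemma int_inner_Ints: "integral_vec z \<Longrightarrow> int_inner r z \<in> \<int>"
  unfolding int_inner_def integral_vec_def by (intro Ints_sum Ints_mult) auto

lemma polyhedron_iff:
  "x \<in> polyhedron A b \<longleftrightarrow> (\<forall>i. int_inner (A $ i) x \<le> real_of_int (b $ i))"
  by (simp add: polyhedron_def int_inner_def)

lemma polyhedron_list_iff:
  "x \<in> polyhedron_list L \<longleftrightarrow> (\<forall>(r, \<beta>) \<in> set L. int_inner r x \<le> real_of_int \<beta>)"
  by (simp add: polyhedron_list_def int_inner_def)

lemma Rats_vec_common_denominator:
  assumes "\<forall>j. (c::real^'n) $ j \<in> \<rat>"
  shows "\<exists>D::real. D > 0 \<and> (\<forall>j. D * c $ j \<in> \<int>)"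
proof -
  have "\<exists>q::int. q > 0 \<and> of_int q * c $ j \<in> \<int>" for j
  proof -
    have "c $ j \<in> \<rat>" using assms by blast
    then obtain a q where "q > 0" "c $ j = of_int a / of_int q" by (auto elim: Rats_cases')
    then show ?thesis by (intro exI[of _ q]) auto
  qed
  then obtain Q where Q: "\<And>j. Q j > 0" "\<And>j. of_int (Q j) * c $ j \<in> \<int>" by metis
  define D where "D = (\<Prod>j\<in>UNIV. real_of_int (Q j))"
  have "D * c $ j \<in> \<int>" for j
  proof -
    have "D * c $ j = (of_int (Q j) * c $ j) * (\<Prod>k\<in>UNIV - {j}. real_of_int (Q k))"
      unfolding D_def using prod.remove[of UNIV j "\<lambda>k. real_of_int (Q k)"] by simp
    also have "\<dots> \<in> \<int>" by (intro Ints_mult[OF Q(2)] Ints_prod) auto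
    finally show ?thesis .
  qed
  moreover have "D > 0" unfolding D_def using Q(1) by (intro prod_pos) auto
  ultimately show ?thesis by blast
qed

lemma inner_Ints_scaled:
  assumes "integral_vec (z::real^'n)" "\<forall>j. D * c $ j \<in> \<int>"
  shows "D * (c \<bullet> z) \<in> \<int>"
proof -
  have "D * (c \<bullet> z) = (\<Sum>j\<in>UNIV. (D * c $ j) * z $ j)"
    by (simp add: inner_vec_def sum_distrib_left mult_ac)
  also have "\<dots> \<in> \<int>" using assms unfolding integral_vec_def by (intro Ints_sum) (simp add: Ints_mult)
  finally show ?thesis .
qed

lemma bounded_scaled_Ints_has_max:
  fixes f :: "'a \<Rightarrow> real"
  assumes "x0 \<in> X" "\<forall>x\<in>X. f x \<le> B" "D > 0" "\<forall>x\<in>X. D * f x \<in> \<int>"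
  shows "\<exists>x\<in>X. \<forall>y\<in>X. f y \<le> f x"
proof -
  define gap where "gap x = nat (\<lceil>D * B\<rceil> - \<lfloor>D * f x\<rfloor>)" for x
  obtain x where x: "x \<in> X" "\<And>y. y \<in> X \<Longrightarrow> gap x \<le> gap y"
    using ex_has_least_nat[of "\<lambda>x. x \<in> X", OF assms(1), of gap] by blast
  have below: "\<lfloor>D * f y\<rfloor> \<le> \<lceil>D * B\<rceil>" if "y \<in> X" for y
  proof -
    have "D * f y \<le> D * B" using assms(2,3) that by simp
    then show ?thesis by (meson ceiling_mono floor_le_ceiling order_trans)
  qed
  have "D * f y \<le> D * f x" if "y \<in> X" for y
  proof -
    have "\<lfloor>D * f y\<rfloor> \<le> \<lfloor>D * f x\<rfloor>"
      using x(2)[OF that] below[OF that] below[OF x(1)] by (simp add: gap_def)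
    then show ?thesis using assms(4) that x(1) by (metis Ints_cases floor_of_int of_int_le_iff)
  qed
  then show ?thesis using x(1) assms(3) by auto
qed

lemma bounded_scaled_Ints_has_lex_max:
  fixes f g :: "'a \<Rightarrow> real"
  assumes "x0 \<in> X"
    and "\<forall>x\<in>X. f x \<le> B" "D > 0" "\<forall>x\<in>X. D * f x \<in> \<int>"
    and "\<forall>x\<in>X. g x \<le> B'" "D' > 0" "\<forall>x\<in>X. D' * g x \<in> \<int>"
  shows "\<exists>x\<in>X. (\<forall>y\<in>X. f y \<le> f x) \<and> (\<forall>y\<in>X. f y = f x \<longrightarrow> g y \<le> g x)"
proof -
  obtain x1 where x1: "x1 \<in> X" "\<forall>y\<in>X. f y \<le> f x1"
    using bounded_scaled_Ints_has_max[OF assms(1-4)] by blast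
  then obtain x where "x \<in> {y\<in>X. f y = f x1}" "\<forall>y\<in>{y\<in>X. f y = f x1}. g y \<le> g x"
    using bounded_scaled_Ints_has_max[of x1 "{y\<in>X. f y = f x1}" g B' D'] assms(5-7) by auto
  with x1 show ?thesis by (intro bexI[of _ x]) auto
qed

lemma polyhedron_feasible_direction:
  assumes x: "x \<in> polyhedron A b"
    and d: "\<And>i. int_inner (A $ i) x = b $ i \<Longrightarrow> int_inner (A $ i) d \<le> 0"
  shows "\<exists>t>0. \<forall>s. 0 \<le> s \<and> s \<le> t \<longrightarrow> x + s *\<^sub>R d \<in> polyhedron A b"
proof -
  define K where "K = {i. int_inner (A $ i) d > 0}"
  define step where "step i = (b $ i - int_inner (A $ i) x) / int_inner (A $ i) d" for i
  define t where "t = Min (insert 1 (step ` K))"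
  have xb: "int_inner (A $ i) x \<le> b $ i" for i using x by (simp add: polyhedron_iff)
  have fin: "finite (insert 1 (step ` K))" by simp
  have "t > 0" unfolding t_def
  proof (subst Min_gr_iff[OF fin])
    have "step i > 0" if "i \<in> K" for i
      using d[of i] xb[of i] that by (force simp: K_def step_def)
    then show "\<forall>a\<in>insert 1 (step ` K). 0 < a" by auto
  qed auto
  moreover have "x + s *\<^sub>R d \<in> polyhedron A b" if s: "0 \<le> s" "s \<le> t" for s
    unfolding polyhedron_iff
  proof
    fix i
    show "int_inner (A $ i) (x + s *\<^sub>R d) \<le> b $ i"
    proof (cases "i \<in> K")
      case True
      then have pos: "int_inner (A $ i) d > 0" by (simp add: K_def)
      have "s \<le> step i" using s Min_le[OF fin, of "step i"] True by (simp add: t_def)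
      then have "s * int_inner (A $ i) d \<le> b $ i - int_inner (A $ i) x"
        using pos by (simp add: step_def field_simps)
      then show ?thesis by (simp add: int_inner_add_right int_inner_scaleR_right)
    next
      case False
      then have "s * int_inner (A $ i) d \<le> 0"
        using s by (simp add: K_def mult_nonneg_nonpos)
      then show ?thesis using xb[of i] by (simp add: int_inner_add_right int_inner_scaleR_right)
    qed
  qed
  ultimately show ?thesis by blast
qed

lemma optimal_feasible_direction_nonpos:
  assumes x: "x \<in> polyhedron A b"
    and opt: "\<forall>y\<in>polyhedron A b. c \<bullet> y \<le> c \<bullet> x"
    and d: "\<And>i. int_inner (A $ i) x = b $ i \<Longrightarrow> int_inner (A $ i) d \<le> 0"
  shows "c \<bullet> d \<le> 0"
proof -
  obtain t where "t > 0" "x + t *\<^sub>R d \<in> polyhedron A b"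
    using polyhedron_feasible_direction[OF x d] by auto
  with opt have "t * (c \<bullet> d) \<le> 0" by (auto simp: inner_add_right)
  with \<open>t > 0\<close> show ?thesis by (simp add: mult_le_0_iff)
qed

lemma extreme_point_polyhedron_tight_kernel:
  assumes ext: "x extreme_point_of polyhedron A b"
    and d: "\<And>i. int_inner (A $ i) x = b $ i \<Longrightarrow> int_inner (A $ i) d = 0"
  shows "d = 0"
proof (rule ccontr)
  assume "d \<noteq> 0"
  have x: "x \<in> polyhedron A b" using ext by (simp add: extreme_point_of_def)
  obtain t1 where t1: "t1 > 0" "\<And>s. 0 \<le> s \<Longrightarrow> s \<le> t1 \<Longrightarrow> x + s *\<^sub>R d \<in> polyhedron A b"
    using polyhedron_feasible_direction[OF x, of d] d by fastforce
  obtain t2 where t2: "t2 > 0" "\<And>s. 0 \<le> s \<Longrightarrow> s \<le> t2 \<Longrightarrow> x + s *\<^sub>R (- d) \<in> polyhedron A b"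
    using polyhedron_feasible_direction[OF x, of "- d"] d by (fastforce simp: int_inner_minus_right)
  define s where "s = min t1 t2"
  have "s > 0" using t1 t2 by (simp add: s_def)
  have p: "x + s *\<^sub>R d \<in> polyhedron A b" and q: "x - s *\<^sub>R d \<in> polyhedron A b"
    using t1(2)[of s] t2(2)[of s] \<open>s > 0\<close> by (auto simp: s_def)
  have "x - s *\<^sub>R d \<noteq> x + s *\<^sub>R d"
  proof
    assume "x - s *\<^sub>R d = x + s *\<^sub>R d"
    then have "(s + s) *\<^sub>R d = 0"
      by (metis diff_add_cancel diff_add_eq diff_self scaleR_left_distrib)
    then have "s + s = 0 \<or> d = 0" by (simp only: scaleR_eq_0_iff)
    with \<open>s > 0\<close> \<open>d \<noteq> 0\<close> show False by linarith
  qed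
  moreover have "midpoint (x - s *\<^sub>R d) (x + s *\<^sub>R d) = x"
    by (simp add: midpoint_def scaleR_2[symmetric])
  ultimately have "x \<in> open_segment (x - s *\<^sub>R d) (x + s *\<^sub>R d)"
    using midpoint_in_open_segment by metis
  with ext p q show False by (auto simp: extreme_point_of_def)
qed

lemma exists_integral_optimum_max_tight_sum:
  assumes "\<forall>j. c $ j \<in> \<rat>"
    and "\<forall>x\<in>polyhedron A b. c \<bullet> x \<le> c \<bullet> xstar"
    and "\<exists>z\<in>polyhedron A b. integral_vec z"
  shows "\<exists>zstar\<in>polyhedron A b. integral_vec zstar \<and>
           (\<forall>z\<in>polyhedron A b. integral_vec z \<longrightarrow> c \<bullet> z \<le> c \<bullet> zstar) \<and>
           (\<forall>z\<in>polyhedron A b. integral_vec z \<and> c \<bullet> z = c \<bullet> zstar \<longrightarrow>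
              (\<Sum>i\<in>T. int_inner (A $ i) z) \<le> (\<Sum>i\<in>T. int_inner (A $ i) zstar))"
proof -
  define IP where "IP = {z\<in>polyhedron A b. integral_vec z}"
  obtain z0 where z0: "z0 \<in> IP" using assms(3) by (auto simp: IP_def)
  obtain D :: real where D: "D > 0" "\<forall>j. D * c $ j \<in> \<int>"
    using Rats_vec_common_denominator[OF assms(1)] by blast
  have f_bound: "\<forall>z\<in>IP. c \<bullet> z \<le> c \<bullet> xstar" using assms(2) by (simp add: IP_def)
  have f_Ints: "\<forall>z\<in>IP. D * (c \<bullet> z) \<in> \<int>" using D(2) by (simp add: IP_def inner_Ints_scaled)
  have g_bound: "\<forall>z\<in>IP. (\<Sum>i\<in>T. int_inner (A $ i) z) \<le> (\<Sum>i\<in>T. real_of_int (b $ i))"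
    by (simp add: IP_def polyhedron_iff sum_mono)
  have g_Ints: "\<forall>z\<in>IP. 1 * (\<Sum>i\<in>T. int_inner (A $ i) z) \<in> \<int>"
    by (simp add: IP_def int_inner_Ints Ints_sum)
  show ?thesis
    using bounded_scaled_Ints_has_lex_max[OF z0 f_bound D(1) f_Ints g_bound zero_less_one g_Ints]
    by (auto simp: IP_def)
qed

lemma polyhedron_list_with_cuts:
  assumes L: "set L = range (\<lambda>i. (A $ i, b $ i)) \<union>
                      (\<lambda>i. (- (A $ i), - \<lceil>int_inner (A $ i) z\<rceil>)) ` T"
    and z: "integral_vec z"
  shows "polyhedron_list L =
           {x \<in> polyhedron A b. \<forall>i\<in>T. int_inner (A $ i) z \<le> int_inner (A $ i) x}"
proof -
  have ceiling_eq: "real_of_int \<lceil>int_inner (A $ i) z\<rceil> = int_inner (A $ i) z" for i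
    using int_inner_Ints[OF z] by (metis Ints_cases ceiling_of_int)
  show ?thesis
    by (auto simp: polyhedron_list_iff polyhedron_iff L int_inner_minus_left ceiling_eq
        ball_Un Ball_image_comp)
qed

lemma tight_cuts_integral_point_unique:
  assumes ext: "x extreme_point_of polyhedron A b"
    and opt: "\<forall>y\<in>polyhedron A b. c \<bullet> y \<le> c \<bullet> x"
    and T: "T = {i. int_inner (A $ i) x = b $ i}"
    and zstar_opt: "\<forall>z\<in>polyhedron A b. integral_vec z \<longrightarrow> c \<bullet> z \<le> c \<bullet> zstar"
    and zstar_max: "\<forall>z\<in>polyhedron A b. integral_vec z \<and> c \<bullet> z = c \<bullet> zstar \<longrightarrow>
                      (\<Sum>i\<in>T. int_inner (A $ i) z) \<le> (\<Sum>i\<in>T. int_inner (A $ i) zstar)"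
    and z: "z \<in> polyhedron A b" "integral_vec z"
    and cuts: "\<forall>i\<in>T. int_inner (A $ i) zstar \<le> int_inner (A $ i) z"
  shows "z = zstar"
proof -
  have x: "x \<in> polyhedron A b" using ext by (simp add: extreme_point_of_def)
  have "c \<bullet> (zstar - z) \<le> 0"
    using optimal_feasible_direction_nonpos[OF x opt] cuts T by (simp add: int_inner_diff_right)
  moreover have "c \<bullet> z \<le> c \<bullet> zstar" using zstar_opt z by blast
  ultimately have "c \<bullet> z = c \<bullet> zstar" by (simp add: inner_diff_right)
  then have "(\<Sum>i\<in>T. int_inner (A $ i) z) \<le> (\<Sum>i\<in>T. int_inner (A $ i) zstar)"
    using zstar_max z by blast
  then have "\<forall>i\<in>T. int_inner (A $ i) z = int_inner (A $ i) zstar"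
    using sum_strict_mono_ex1[of T "\<lambda>i. int_inner (A $ i) zstar" "\<lambda>i. int_inner (A $ i) z"] cuts
    by force
  then have "z - zstar = 0"
    using T by (intro extreme_point_polyhedron_tight_kernel[OF ext]) (simp add: int_inner_diff_right)
  then show ?thesis by simp
qed

theorem lemma8:
  fixes A :: "int^'n^'m" and b :: "int^'m" and c :: "real^'n" and xstar :: "real^'n"
  assumes "rank (real_mat A) = CARD('n)"
    and "\<forall>j. c $ j \<in> \<rat>"
    and "vertex_of xstar (polyhedron A b)"
    and "\<forall>x\<in>polyhedron A b. c \<bullet> x \<le> c \<bullet> xstar"
    and "\<exists>z\<in>polyhedron A b. integral_vec z"
  shows "\<exists>zstar Abar.
           zstar \<in> polyhedron A b \<and> integral_vec zstar \<and>
           (\<forall>z\<in>polyhedron A b. integral_vec z \<longrightarrow> c \<bullet> z \<le> c \<bullet> zstar) \<and>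
           (\<forall>(r, \<beta>) \<in> set Abar. \<exists>i. r = A $ i \<or> r = - (A $ i)) \<and>
           polyhedron_list Abar \<subseteq> polyhedron A b \<and>
           vertex_of xstar (polyhedron_list Abar) \<and>
           {x\<in>polyhedron_list Abar. integral_vec x} = {zstar}"
proof -
  define T where "T = {i. int_inner (A $ i) xstar = b $ i}"
  have ext: "xstar extreme_point_of polyhedron A b" using assms(3) by (simp add: vertex_of_def)
  obtain zstar where zstar: "zstar \<in> polyhedron A b" "integral_vec zstar"
    and zstar_opt: "\<forall>z\<in>polyhedron A b. integral_vec z \<longrightarrow> c \<bullet> z \<le> c \<bullet> zstar"
    and zstar_max: "\<forall>z\<in>polyhedron A b. integral_vec z \<and> c \<bullet> z = c \<bullet> zstar \<longrightarrow>
                      (\<Sum>i\<in>T. int_inner (A $ i) z) \<le> (\<Sum>i\<in>T. int_inner (A $ i) zstar)"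
    using exists_integral_optimum_max_tight_sum[OF assms(2,4,5), where T = T] by blast
  have "finite (range (\<lambda>i. (A $ i, b $ i)) \<union>
                (\<lambda>i. (- (A $ i), - \<lceil>int_inner (A $ i) zstar\<rceil>)) ` T)"
    by simp
  then obtain Abar where Abar: "set Abar = range (\<lambda>i. (A $ i, b $ i)) \<union>
                         (\<lambda>i. (- (A $ i), - \<lceil>int_inner (A $ i) zstar\<rceil>)) ` T"
    by (meson finite_list)
  note Q = polyhedron_list_with_cuts[OF Abar zstar(2)]
  have sub: "polyhedron_list Abar \<subseteq> polyhedron A b" by (simp add: Q)
  have "\<forall>i\<in>T. int_inner (A $ i) zstar \<le> int_inner (A $ i) xstar"
    using zstar(1) by (simp add: T_def polyhedron_iff)
  then have "xstar \<in> polyhedron_list Abar" using ext by (simp add: Q extreme_point_of_def)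
  then have "vertex_of xstar (polyhedron_list Abar)"
    using ext sub unfolding vertex_of_def extreme_point_of_def by blast
  moreover have "{x\<in>polyhedron_list Abar. integral_vec x} = {zstar}"
    using tight_cuts_integral_point_unique[OF ext assms(4) T_def zstar_opt zstar_max] zstar
    by (auto simp: Q)
  moreover have "\<forall>(r, \<beta>) \<in> set Abar. \<exists>i. r = A $ i \<or> r = - (A $ i)" by (auto simp: Abar)
  ultimately show ?thesis using zstar zstar_opt sub by blast
qed

end
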